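(* Let $L$ be a finite language over a $k$-letter alphabet accepted by a layered NFA of width $\omega$ and length $n$ with $f$ final states. Then $L$ can be described by a regular expression of length $\mathrm{rpn}(L) \leq O\big( f k n \omega \cdot \omega^{\log n} \big)$.
   Context: An NFA for a finite language is layered if its set of states admits a partition $Q_0\cup Q_1\cup\dots\cup Q_n$ such that every word of length $j$ leads (from the initial state) only to states in $Q_j$; $Q_j$ is the $j$-th layer. Its width is $\omega=\max_{0\le j\le n}|Q_j|$ and its length is the length $n$ of its longest path. Regular expressions are built from $\epsilon$ and letters by union and concatenation; $\mathrm{rpn}(R)$ is the number of nodes in the syntax tree of $R$, and $\mathrm{rpn}(L)$ is the minimum over expressions describing $L$. Logarithms are base 2; the constant in $O(\cdot)$ is absolute. *)

theory Defs
  imports Complex_Main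
begin

datatype 'a rexp = Eps | Sym 'a | Union "'a rexp" "'a rexp" | Conc "'a rexp" "'a rexp"

fun lang :: "'a rexp \<Rightarrow> 'a list set" where
  "lang Eps = {[]}"
| "lang (Sym a) = {[a]}"
| "lang (Union r s) = lang r \<union> lang s"
| "lang (Conc r s) = {u @ v | u v. u \<in> lang r \<and> v \<in> lang s}"

fun rpn :: "'a rexp \<Rightarrow> nat" where
  "rpn Eps = 1"
| "rpn (Sym a) = 1"
| "rpn (Union r s) = 1 + rpn r + rpn s"
| "rpn (Conc r s) = 1 + rpn r + rpn s"

definition rpn_lang :: "'a list set \<Rightarrow> nat" where
  "rpn_lang L = (LEAST m. \<exists>r. lang r = L \<and> rpn r = m)"

fun reach :: "('s \<times> 'a \<times> 's) set \<Rightarrow> 's \<Rightarrow> 'a list \<Rightarrow> 's set" where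
  "reach \<delta> q [] = {q}"
| "reach \<delta> q (a # w) = (\<Union>p \<in> {p. (q, a, p) \<in> \<delta>}. reach \<delta> p w)"

definition nfa :: "'s set \<Rightarrow> 'a set \<Rightarrow> ('s \<times> 'a \<times> 's) set \<Rightarrow> 's \<Rightarrow> 's set \<Rightarrow> bool" where
  "nfa Q \<Sigma> \<delta> q0 F \<longleftrightarrow> finite Q \<and> finite \<Sigma> \<and> q0 \<in> Q \<and> F \<subseteq> Q \<and> \<delta> \<subseteq> Q \<times> \<Sigma> \<times> Q"

definition accepted :: "('s \<times> 'a \<times> 's) set \<Rightarrow> 's \<Rightarrow> 's set \<Rightarrow> 'a list set" where
  "accepted \<delta> q0 F = {w. reach \<delta> q0 w \<inter> F \<noteq> {}}"

definition nfa_length :: "('s \<times> 'a \<times> 's) set \<Rightarrow> 's \<Rightarrow> nat" where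
  "nfa_length \<delta> q0 = (GREATEST m. \<exists>w. length w = m \<and> reach \<delta> q0 w \<noteq> {})"

text \<open>Layering: the function lay assigns each state its layer, i.e. the partition
  Q = Q_0 \<union> ... \<union> Q_n with Q_j = {q \<in> Q. lay q = j}, where n is the length;
  every word of length j leads only to states of Q_j.\<close>
definition layering :: "'s set \<Rightarrow> ('s \<times> 'a \<times> 's) set \<Rightarrow> 's \<Rightarrow> ('s \<Rightarrow> nat) \<Rightarrow> bool" where
  "layering Q \<delta> q0 lay \<longleftrightarrow>
     (\<forall>q\<in>Q. lay q \<le> nfa_length \<delta> q0) \<and>
     (\<forall>w q. q \<in> reach \<delta> q0 w \<longrightarrow> lay q = length w)"

definition width :: "'s set \<Rightarrow> ('s \<times> 'a \<times> 's) set \<Rightarrow> 's \<Rightarrow> ('s \<Rightarrow> nat) \<Rightarrow> nat" where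
  "width Q \<delta> q0 lay = Max ((\<lambda>j. card {q \<in> Q. lay q = j}) ` {0..nfa_length \<delta> q0})"

end

theory Submission
  imports Defs
begin

text \<open>Let \<open>W p d q\<close> (\<open>words_between\<close>) be the set of words of length \<open>d\<close> leading from \<open>p\<close>
  to \<open>q\<close>. Cutting a word of length \<open>d\<close> in two halves gives
  \<open>W p d q = \<Union>\<^sub>r W p \<lfloor>d/2\<rfloor> r \<cdot> W r \<lceil>d/2\<rceil> q\<close>, where in a layered NFA \<open>r\<close> ranges over a single
  layer, i.e. over at most \<open>\<omega>\<close> states. Hence an expression for words of length up to \<open>2\<^sup>c\<close>
  costs at most \<open>2\<omega>\<close> times as much as one for length up to \<open>2\<^sup>c\<^sup>-\<^sup>1\<close>, and single letters
  cost \<open>O(k)\<close>, giving size \<open>O(k (2\<omega>)\<^sup>c)\<close> with \<open>c = \<lceil>log n\<rceil>\<close>. The accepted language is the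
  union over the final states \<open>f\<close> of \<open>W q\<^sub>0 (lay f) f\<close>.\<close>

definition conc :: "'a list set \<Rightarrow> 'a list set \<Rightarrow> 'a list set" where
  "conc A B = {u @ v | u v. u \<in> A \<and> v \<in> B}"

text \<open>Expressions cannot describe \<open>{}\<close>, hence the first disjunct. The strict bound makes
  sizes additive: \<open>rpn (Union r s) < t\<^sub>1 + t\<^sub>2\<close> whenever \<open>rpn r < t\<^sub>1\<close> and \<open>rpn s < t\<^sub>2\<close>.\<close>
definition describable_below :: "'a list set \<Rightarrow> nat \<Rightarrow> bool" where
  "describable_below L t \<longleftrightarrow> L = {} \<or> (\<exists>r. lang r = L \<and> rpn r < t)"

lemma describable_below_mono: "describable_below L s \<Longrightarrow> s \<le> t \<Longrightarrow> describable_below L t"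
  unfolding describable_below_def by auto

lemma describable_below_empty [simp]: "describable_below {} t"
  unfolding describable_below_def by simp

lemma describable_below_Nil: "describable_below {[]} 2"
  unfolding describable_below_def by (intro disjI2 exI[of _ Eps]) simp

lemma describable_below_singleton: "describable_below {[a]} 2"
  unfolding describable_below_def by (intro disjI2 exI[of _ "Sym a"]) simp

lemma describable_below_Un:
  assumes "describable_below A s" "describable_below B t"
  shows "describable_below (A \<union> B) (s + t)"
proof -
  consider "A = {}" | "B = {}" | r r' where "lang r = A" "rpn r < s" "lang r' = B" "rpn r' < t"
    using assms unfolding describable_below_def by blast
  then show ?thesis
  proof cases
    case 1
    then show ?thesis using assms(2) describable_below_mono[OF _ le_add2] by simp
  next
    case 2
    then show ?thesis using assms(1) describable_below_mono[OF _ le_add1] by simp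
  next
    case 3
    then show ?thesis unfolding describable_below_def by (intro disjI2 exI[of _ "Union r r'"]) auto
  qed
qed

lemma describable_below_conc:
  assumes "describable_below A s" "describable_below B t"
  shows "describable_below (conc A B) (s + t)"
proof -
  consider "A = {}" | "B = {}" | r r' where "lang r = A" "rpn r < s" "lang r' = B" "rpn r' < t"
    using assms unfolding describable_below_def by blast
  then show ?thesis
  proof cases
    case 3
    then show ?thesis
      unfolding describable_below_def conc_def by (intro disjI2 exI[of _ "Conc r r'"]) auto
  qed (auto simp: conc_def)
qed

lemma describable_below_UN:
  assumes "finite I" "card I \<le> m" "\<And>i. i \<in> I \<Longrightarrow> describable_below (A i) t"
  shows "describable_below (\<Union>i\<in>I. A i) (m * t)"
proof -
  have "describable_below (\<Union>i\<in>I. A i) (card I * t)"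
    using assms(1,3)
  proof (induction I rule: finite_induct)
    case (insert i I)
    then show ?case using describable_below_Un[of "A i" t] by simp
  qed simp
  then show ?thesis using assms(2) describable_below_mono mult_le_mono1 by blast
qed

lemma rpn_lang_less:
  assumes "describable_below L t" "L \<noteq> {}"
  shows "rpn_lang L < t"
proof -
  obtain r where "lang r = L" "rpn r < t"
    using assms unfolding describable_below_def by blast
  then have "rpn_lang L \<le> rpn r"
    unfolding rpn_lang_def by (intro Least_le) blast
  with \<open>rpn r < t\<close> show ?thesis by simp
qed

lemma reach_append: "reach \<delta> p (u @ v) = (\<Union>r\<in>reach \<delta> p u. reach \<delta> r v)"
  by (induction u arbitrary: p) auto

lemma reach_subset: "\<delta> \<subseteq> Q \<times> \<Sigma> \<times> Q \<Longrightarrow> p \<in> Q \<Longrightarrow> reach \<delta> p w \<subseteq> Q"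
  by (induction w arbitrary: p) auto

definition words_between :: "('s \<times> 'a \<times> 's) set \<Rightarrow> 's \<Rightarrow> nat \<Rightarrow> 's \<Rightarrow> 'a list set" where
  "words_between \<delta> p d q = {w. length w = d \<and> q \<in> reach \<delta> p w}"

lemma words_between_0: "words_between \<delta> p 0 q = (if q = p then {[]} else {})"
  by (auto simp: words_between_def)

lemma words_between_1: "words_between \<delta> p 1 q = (\<Union>a\<in>{a. (p, a, q) \<in> \<delta>}. {[a]})"
  by (auto simp: words_between_def length_Suc_conv)

lemma words_between_add:
  assumes "\<And>u. length u = d\<^sub>1 \<Longrightarrow> reach \<delta> p u \<subseteq> R"
  shows "words_between \<delta> p (d\<^sub>1 + d\<^sub>2) q =
    (\<Union>r\<in>R. conc (words_between \<delta> p d\<^sub>1 r) (words_between \<delta> r d\<^sub>2 q))"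
proof (intro equalityI subsetI)
  fix w assume "w \<in> words_between \<delta> p (d\<^sub>1 + d\<^sub>2) q"
  then have "w = take d\<^sub>1 w @ drop d\<^sub>1 w" "length (take d\<^sub>1 w) = d\<^sub>1" "length (drop d\<^sub>1 w) = d\<^sub>2"
    and "q \<in> reach \<delta> p (take d\<^sub>1 w @ drop d\<^sub>1 w)"
    by (auto simp: words_between_def)
  then show "w \<in> (\<Union>r\<in>R. conc (words_between \<delta> p d\<^sub>1 r) (words_between \<delta> r d\<^sub>2 q))"
    using assms unfolding reach_append conc_def words_between_def by blast
qed (auto simp: conc_def words_between_def reach_append)

lemma describable_below_words_between:
  assumes \<delta>: "\<delta> \<subseteq> UNIV \<times> \<Sigma> \<times> UNIV" "finite \<Sigma>" "\<Sigma> \<noteq> {}"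
    and layer: "\<And>w. reach \<delta> q\<^sub>0 w \<subseteq> layer (length w)" "\<And>j. finite (layer j)"
    "\<And>j. card (layer j) \<le> \<omega>"
  shows "p \<in> reach \<delta> q\<^sub>0 x \<Longrightarrow> d \<le> 2 ^ c \<Longrightarrow>
    describable_below (words_between \<delta> p d q) (2 * card \<Sigma> * (2 * \<omega>) ^ c)"
proof (induction c arbitrary: p d q x)
  case 0
  have "1 \<le> card \<Sigma>" using \<delta>(2,3) by (simp add: Suc_le_eq card_gt_0_iff)
  show ?case
  proof (cases "d = 0")
    case True
    have "describable_below (words_between \<delta> p 0 q) 2"
      by (simp add: words_between_0 describable_below_Nil)
    then show ?thesis
      using True \<open>1 \<le> card \<Sigma>\<close> by (simp add: describable_below_mono)
  next
    case False
    have "finite {a. (p, a, q) \<in> \<delta>}" "card {a. (p, a, q) \<in> \<delta>} \<le> card \<Sigma>"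
      using \<delta>(1,2) by (auto intro: finite_subset card_mono)
    then have "describable_below (words_between \<delta> p 1 q) (card \<Sigma> * 2)"
      unfolding words_between_1 by (intro describable_below_UN describable_below_singleton)
    moreover have "d = 1" using False 0 by simp
    ultimately show ?thesis by (simp add: mult.commute)
  qed
next
  case (Suc c)
  define d\<^sub>1 where "d\<^sub>1 = d div 2"
  define d\<^sub>2 where "d\<^sub>2 = d - d div 2"
  have "d\<^sub>1 \<le> 2 ^ c" "d\<^sub>2 \<le> 2 ^ c" "d = d\<^sub>1 + d\<^sub>2"
    using Suc.prems(2) unfolding d\<^sub>1_def d\<^sub>2_def by auto
  let ?R = "layer (length x + d\<^sub>1)"
  have reach_R: "reach \<delta> p u \<subseteq> ?R" if "length u = d\<^sub>1" for u
    using layer(1)[of "x @ u"] Suc.prems(1) that by (auto simp: reach_append)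
  have halves: "describable_below (conc (words_between \<delta> p d\<^sub>1 r) (words_between \<delta> r d\<^sub>2 q))
      (2 * (2 * card \<Sigma> * (2 * \<omega>) ^ c))" if "r \<in> ?R" for r
  proof (cases "words_between \<delta> p d\<^sub>1 r = {}")
    case False \<comment> \<open>then \<open>r\<close> is reachable from \<open>q\<^sub>0\<close>, as the induction hypothesis at \<open>r\<close> requires\<close>
    then obtain u where "length u = d\<^sub>1" "r \<in> reach \<delta> p u"
      by (auto simp: words_between_def)
    then have "r \<in> reach \<delta> q\<^sub>0 (x @ u)" using Suc.prems(1) by (auto simp: reach_append)
    then show ?thesis
      using Suc.IH[OF Suc.prems(1) \<open>d\<^sub>1 \<le> 2 ^ c\<close>] Suc.IH[of r _ d\<^sub>2] \<open>d\<^sub>2 \<le> 2 ^ c\<close>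
      by (simp add: describable_below_conc mult_2)
  qed (simp add: conc_def)
  have "words_between \<delta> p d q =
      (\<Union>r\<in>?R. conc (words_between \<delta> p d\<^sub>1 r) (words_between \<delta> r d\<^sub>2 q))"
    unfolding \<open>d = d\<^sub>1 + d\<^sub>2\<close> using reach_R by (rule words_between_add)
  moreover have "describable_below
      (\<Union>r\<in>?R. conc (words_between \<delta> p d\<^sub>1 r) (words_between \<delta> r d\<^sub>2 q))
      (\<omega> * (2 * (2 * card \<Sigma> * (2 * \<omega>) ^ c)))"
    by (rule describable_below_UN[OF layer(2,3) halves])
  ultimately show ?case by (simp add: algebra_simps)
qed

lemma nfa_length_empty: "nfa_length {} q\<^sub>0 = 0"
proof -
  have [simp]: "reach {} q\<^sub>0 w = (if w = [] then {q\<^sub>0} else {})" for w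
    by (cases w) auto
  show ?thesis
    unfolding nfa_length_def by (intro Greatest_equality) auto
qed

lemma card_layer_le_width:
  assumes "layering Q \<delta> q\<^sub>0 lay"
  shows "card {q \<in> Q. lay q = j} \<le> width Q \<delta> q\<^sub>0 lay"
proof (cases "j \<le> nfa_length \<delta> q\<^sub>0")
  case True
  then show ?thesis unfolding width_def by (intro Max_ge) auto
next
  case False
  then have "{q \<in> Q. lay q = j} = {}" using assms unfolding layering_def by force
  then show ?thesis by (metis card.empty zero_le)
qed

lemma width_pos:
  assumes "nfa Q \<Sigma> \<delta> q\<^sub>0 F" "layering Q \<delta> q\<^sub>0 lay"
  shows "1 \<le> width Q \<delta> q\<^sub>0 lay"
proof -
  have "lay q\<^sub>0 = 0"
    using assms(2) reach.simps(1)[of \<delta> q\<^sub>0] unfolding layering_def by (metis list.size(3) singletonI)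
  then have "q\<^sub>0 \<in> {q \<in> Q. lay q = 0}" "finite {q \<in> Q. lay q = 0}"
    using assms(1) unfolding nfa_def by auto
  then have "1 \<le> card {q \<in> Q. lay q = 0}"
    by (metis Suc_le_eq card_gt_0_iff empty_iff One_nat_def)
  then show ?thesis using card_layer_le_width[OF assms(2)] le_trans by blast
qed

lemma accepted_eq_UN_words_between:
  assumes "layering Q \<delta> q\<^sub>0 lay"
  shows "accepted \<delta> q\<^sub>0 F = (\<Union>f\<in>F. words_between \<delta> q\<^sub>0 (lay f) f)"
  using assms unfolding layering_def accepted_def words_between_def by auto

lemma rpn_lang_accepted_less:
  assumes nfa: "nfa Q \<Sigma> \<delta> q\<^sub>0 F" and lay: "layering Q \<delta> q\<^sub>0 lay"
    and "\<Sigma> \<noteq> {}" "nfa_length \<delta> q\<^sub>0 \<le> 2 ^ c" "accepted \<delta> q\<^sub>0 F \<noteq> {}"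
  shows "rpn_lang (accepted \<delta> q\<^sub>0 F) < card F * (2 * card \<Sigma> * (2 * width Q \<delta> q\<^sub>0 lay) ^ c)"
proof -
  have Q: "finite Q" "finite \<Sigma>" "q\<^sub>0 \<in> Q" "F \<subseteq> Q" "\<delta> \<subseteq> Q \<times> \<Sigma> \<times> Q"
    using nfa unfolding nfa_def by auto
  let ?layer = "\<lambda>j. {q \<in> Q. lay q = j}"
  have "reach \<delta> q\<^sub>0 w \<subseteq> ?layer (length w)" for w
    using reach_subset[OF Q(5,3)] lay unfolding layering_def by blast
  moreover have "\<delta> \<subseteq> UNIV \<times> \<Sigma> \<times> UNIV" using Q(5) by blast
  ultimately have words: "describable_below (words_between \<delta> q\<^sub>0 d q)
      (2 * card \<Sigma> * (2 * width Q \<delta> q\<^sub>0 lay) ^ c)" if "d \<le> 2 ^ c" for d q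
    using that Q(1,2) \<open>\<Sigma> \<noteq> {}\<close> card_layer_le_width[OF lay]
    by (intro describable_below_words_between[where x = "[]" and layer = ?layer]) auto
  have "lay f \<le> 2 ^ c" if "f \<in> F" for f
    using lay that Q(4) assms(4) unfolding layering_def by force
  then have "describable_below (accepted \<delta> q\<^sub>0 F)
      (card F * (2 * card \<Sigma> * (2 * width Q \<delta> q\<^sub>0 lay) ^ c))"
    unfolding accepted_eq_UN_words_between[OF lay]
    by (intro describable_below_UN words) (use Q(1,4) finite_subset in auto)
  then show ?thesis using assms(5) by (rule rpn_lang_less)
qed

lemma power_nat_ceiling_bounds:
  fixes x l :: real
  assumes "1 \<le> x" "0 \<le> l"
  shows "x powr l \<le> x ^ nat \<lceil>l\<rceil>" and "x ^ nat \<lceil>l\<rceil> \<le> x * x powr l"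
proof -
  have "x ^ nat \<lceil>l\<rceil> = x powr \<lceil>l\<rceil>"
    using assms by (simp add: powr_realpow[symmetric])
  moreover have "x powr l \<le> x powr \<lceil>l\<rceil>" "x powr \<lceil>l\<rceil> \<le> x powr (l + 1)"
    using assms by (intro powr_mono; linarith)+
  ultimately show "x powr l \<le> x ^ nat \<lceil>l\<rceil>" "x ^ nat \<lceil>l\<rceil> \<le> x * x powr l"
    using assms by (simp_all add: powr_add mult.commute)
qed

lemma le_two_power_ceiling_log2:
  fixes n :: nat
  assumes "1 \<le> n"
  shows "n \<le> 2 ^ nat \<lceil>log 2 n\<rceil>"
proof -
  have "real n = 2 powr log 2 n" using assms by simp
  also have "\<dots> \<le> 2 ^ nat \<lceil>log 2 n\<rceil>" using assms by (intro power_nat_ceiling_bounds(1)) auto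
  finally show ?thesis by (metis of_nat_le_iff of_nat_numeral of_nat_power)
qed

lemma double_power_ceiling_log2_le:
  fixes n :: nat and x :: real
  assumes "1 \<le> n" "1 \<le> x"
  shows "(2 * x) ^ nat \<lceil>log 2 n\<rceil> \<le> 2 * real n * x * x powr log 2 n"
proof -
  define l where "l = log 2 n"
  have "0 \<le> l" "real n = 2 powr l" using assms(1) unfolding l_def by simp_all
  have "(2 * x) ^ nat \<lceil>l\<rceil> = 2 ^ nat \<lceil>l\<rceil> * x ^ nat \<lceil>l\<rceil>" by (simp add: power_mult_distrib)
  also have "\<dots> \<le> (2 * 2 powr l) * (x * x powr l)"
    using power_nat_ceiling_bounds(2)[of 2 l] power_nat_ceiling_bounds(2)[of x l] assms(2) \<open>0 \<le> l\<close>
    by (intro mult_mono) auto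
  also have "\<dots> = 2 * real n * x * x powr l" using \<open>real n = 2 powr l\<close> by simp
  finally show ?thesis unfolding l_def .
qed

theorem proposition3p2:
  "\<exists>C::real. \<forall>(Q::nat set) (\<Sigma>::nat set) \<delta> q0 F lay.
     nfa Q \<Sigma> \<delta> q0 F \<and> layering Q \<delta> q0 lay \<and>
     nfa_length \<delta> q0 \<ge> 1 \<and> accepted \<delta> q0 F \<noteq> {} \<longrightarrow>
     real (rpn_lang (accepted \<delta> q0 F)) \<le>
       C * real (card F) * real (card \<Sigma>) * real (nfa_length \<delta> q0) * real (width Q \<delta> q0 lay)
         * real (width Q \<delta> q0 lay) powr log 2 (real (nfa_length \<delta> q0))"
proof (intro exI[of _ 4] allI impI, elim conjE)
  fix Q \<Sigma> :: "nat set" and \<delta> :: "(nat \<times> nat \<times> nat) set" and q0 F lay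
  assume nfa: "nfa Q \<Sigma> \<delta> q0 F" and lay: "layering Q \<delta> q0 lay"
    and len: "nfa_length \<delta> q0 \<ge> 1" and "accepted \<delta> q0 F \<noteq> {}"
  define n where "n = nfa_length \<delta> q0"
  define \<omega> where "\<omega> = width Q \<delta> q0 lay"
  define c where "c = nat \<lceil>log 2 (real n)\<rceil>"
  have "\<delta> \<noteq> {}" using len nfa_length_empty by (metis not_one_le_zero)
  then have "\<Sigma> \<noteq> {}" using nfa unfolding nfa_def by blast
  then have "rpn_lang (accepted \<delta> q0 F) < card F * (2 * card \<Sigma> * (2 * \<omega>) ^ c)"
    using rpn_lang_accepted_less[OF nfa lay] le_two_power_ceiling_log2[of n] len
      \<open>accepted \<delta> q0 F \<noteq> {}\<close> unfolding n_def \<omega>_def c_def by simp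
  then have "real (rpn_lang (accepted \<delta> q0 F)) \<le> real (card F * (2 * card \<Sigma> * (2 * \<omega>) ^ c))"
    by (simp only: of_nat_le_iff less_imp_le)
  also have "\<dots> = real (card F) * (2 * real (card \<Sigma>) * (2 * real \<omega>) ^ c)"
    by simp
  also have "\<dots> \<le> real (card F) * (2 * real (card \<Sigma>) * (2 * real n * \<omega> * \<omega> powr log 2 n))"
    using double_power_ceiling_log2_le[of n \<omega>] len width_pos[OF nfa lay]
    unfolding n_def \<omega>_def c_def by (intro mult_left_mono) auto
  finally show "real (rpn_lang (accepted \<delta> q0 F)) \<le> 4 * real (card F) * real (card \<Sigma>)
      * real (nfa_length \<delta> q0) * real (width Q \<delta> q0 lay) * real (width Q \<delta> q0 lay) powr
      log 2 (real (nfa_length \<delta> q0))"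
    unfolding n_def \<omega>_def by (simp add: algebra_simps)
qed

end
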